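(* Let $\nu>0$, $0<K<\nu^2/2$, and let $(\Phi_m)$ satisfy the standing assumptions in the context. Then $P(K)>Q(K)$, where $P(K):=\sup_{W\in\mathcal{C}_K}\mathcal{P}(W)$ and $Q(K):=\sup_{W\in\mathcal{C}_K}\mathcal{Q}(W)$.
   Context: $A_m f(\xi):=\int_{-m/2}^{m/2} f(\xi+s)\,ds$. $\Psi_m(r):=\Phi_m(\nu m-r)-\Phi_m(\nu m)+\Phi_m'(\nu m)r$ for $r\in[0,\nu m)$. $\mathcal{P}(W):=\int_{\mathbb{R}}\sum_{m\ge1}\Psi_m(A_mW(s))\,ds$ and $\mathcal{Q}(W):=\frac12\int_{\mathbb{R}}\sum_{m\ge1}\Phi_m''(\nu m)(A_mW(s))^2\,ds$. $\mathcal{C}$ is the $\mathsf{L}^2(\mathbb{R})$-closure of $\{W\in C_c^\infty(\mathbb{R}): W(x)=W(-x)\ge0,\ \dot W(x)=-\dot W(-x)\le0\ \forall x\ge0\}$; $\mathcal{C}_K:=\{W\in\mathcal{C}:\frac12\|W\|_2^2=K\}$. Standing assumptions: for every $m$, $\Phi_m:[0,\infty)\to[0,\infty)$, $\Phi_m\in C^4([0,\infty))$, $\Phi_m\ge0,\Phi_m'\le0,\Phi_m''\ge0,\Phi_m'''\le0,\Phi_m^{(4)}\ge0$, strict for $m=1$ and $s>0$; and for a fixed $\gamma\in(5/2,3)$ the series $\sum_m\Phi_m'(\nu m-\sqrt{2Km})m$, $\sum_m\Phi_m''(\nu m-\sqrt{2Km})m^2$, $\sum_m\Phi_m''(\nu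 m)m^\gamma$, $\sum_m\Phi_m'''(\nu m-\sqrt{2Km})m^{3/2}$ are finite. *)

theory Defs
  imports "HOL-Analysis.Analysis"
begin

text \<open>k-th derivative (two-sided; used only at interior points x > 0).\<close>
definition hderiv :: "(real \<Rightarrow> real) \<Rightarrow> nat \<Rightarrow> real \<Rightarrow> real" where
  "hderiv f k = (deriv ^^ k) f"

definition C4_nonneg :: "(real \<Rightarrow> real) \<Rightarrow> bool" where
  "C4_nonneg f \<longleftrightarrow> (\<exists>d :: nat \<Rightarrow> real \<Rightarrow> real. d 0 = f \<and>
     (\<forall>k<4. \<forall>x\<ge>0. (d k has_real_derivative d (Suc k) x) (at x within {0..})) \<and>
     continuous_on {0..} (d 4))"

definition Aop :: "nat \<Rightarrow> (real \<Rightarrow> real) \<Rightarrow> real \<Rightarrow> real" where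
  "Aop m f \<xi> = set_lebesgue_integral lborel {-(real m)/2..(real m)/2} (\<lambda>s. f (\<xi> + s))"

definition Psi :: "(nat \<Rightarrow> real \<Rightarrow> real) \<Rightarrow> real \<Rightarrow> nat \<Rightarrow> real \<Rightarrow> real" where
  "Psi \<Phi> \<nu> m r = \<Phi> m (\<nu> * real m - r) - \<Phi> m (\<nu> * real m) + hderiv (\<Phi> m) 1 (\<nu> * real m) * r"

text \<open>The functionals P and Q (integrands are nonnegative on the cone; sum over m \<ge> 1).\<close>
definition Pfun :: "(nat \<Rightarrow> real \<Rightarrow> real) \<Rightarrow> real \<Rightarrow> (real \<Rightarrow> real) \<Rightarrow> ennreal" where
  "Pfun \<Phi> \<nu> W = (\<integral>\<^sup>+ s. (\<Sum>m. ennreal (Psi \<Phi> \<nu> (Suc m) (Aop (Suc m) W s))) \<partial>lborel)"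

definition Qfun :: "(nat \<Rightarrow> real \<Rightarrow> real) \<Rightarrow> real \<Rightarrow> (real \<Rightarrow> real) \<Rightarrow> ennreal" where
  "Qfun \<Phi> \<nu> W = (\<integral>\<^sup>+ s. (\<Sum>m. ennreal (1/2 * hderiv (\<Phi> (Suc m)) 2 (\<nu> * real (Suc m))
                                     * (Aop (Suc m) W s)\<^sup>2)) \<partial>lborel)"

definition cone_gen :: "(real \<Rightarrow> real) set" where
  "cone_gen = {W. (\<forall>k x. (deriv ^^ k) W differentiable (at x)) \<and>
                  (\<exists>R. \<forall>x. \<bar>x\<bar> > R \<longrightarrow> W x = 0) \<and>
                  (\<forall>x\<ge>0. W x = W (-x) \<and> W (-x) \<ge> 0 \<and>
                          deriv W x = - deriv W (-x) \<and> - deriv W (-x) \<le> 0)}"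

definition cone :: "(real \<Rightarrow> real) set" where
  "cone = {W. W \<in> borel_measurable lborel \<and> integrable lborel (\<lambda>x. (W x)\<^sup>2) \<and>
              (\<exists>V :: nat \<Rightarrow> real \<Rightarrow> real. (\<forall>n. V n \<in> cone_gen) \<and>
                 (\<lambda>n. integral\<^sup>L lborel (\<lambda>x. (V n x - W x)\<^sup>2)) \<longlonglongrightarrow> 0)}"

definition coneK :: "real \<Rightarrow> (real \<Rightarrow> real) set" where
  "coneK K = {W \<in> cone. (1/2) * integral\<^sup>L lborel (\<lambda>x. (W x)\<^sup>2) = K}"

end

(* Cauchy-Schwarz gives (A_m W)^2 <= m * int_{|t| <= m/2} W(s+t)^2 dt, and integrating in s
   yields Q(W) <= K * sum_m Phi_m''(nu m) m^2 on C_K.  For P we test the plateau W = h 1_(-L,L)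
   with h^2 L = K, an L^2-limit of the smooth even bumps h exp(-1/(a(L^2 - x^2))) and hence in C_K;
   on it A_m W = h m on a set of measure (2L - m)_+.  Taylor's formula with Phi_m'''' >= 0 gives
   Psi_m(r) >= Phi_m''(nu m) r^2/2 - Phi_m'''(nu m) r^3/6.  The quadratic terms recover
   K * sum_m Phi_m''(nu m) m^2 up to an error of order L^(2-gamma), while the cubic term of m = 1
   contributes a gain of order h^3 L ~ L^(-1/2).  Since gamma > 5/2, the gain wins for large L. *)

theory Submission
  imports Defs "HOL-Computational_Algebra.Polynomial"
begin

section \<open>Smooth bumps\<close>

definition exp_inv_poly :: "real poly \<Rightarrow> real \<Rightarrow> real" where
  "exp_inv_poly P y = (if y > 0 then poly P (1/y) * exp (-1/y) else 0)"

definition exp_inv_pderiv :: "real poly \<Rightarrow> real poly" where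
  "exp_inv_pderiv P = [:0, 0, 1:] * (P - pderiv P)"

lemma poly_mult_exp_neg_tendsto_0:
  fixes P :: "real poly"
  shows "((\<lambda>z. poly P z * z * exp (-z)) \<longlongrightarrow> 0) at_top"
proof -
  have "poly P z * z * exp (-z) = (\<Sum>i\<le>degree P. coeff P i * (z ^ Suc i / exp z))" for z :: real
    by (simp add: poly_altdef exp_minus divide_inverse sum_distrib_left sum_distrib_right mult_ac)
  moreover have "((\<lambda>z. \<Sum>i\<le>degree P. coeff P i * (z ^ Suc i / exp z))
      \<longlongrightarrow> (\<Sum>i\<le>degree P. coeff P i * 0)) at_top"
    by (intro tendsto_sum tendsto_mult tendsto_const tendsto_power_div_exp_0)
  ultimately show ?thesis by simp
qed

lemma exp_inv_poly_div_tendsto_0: "((\<lambda>y. exp_inv_poly P y / y) \<longlongrightarrow> 0) (at 0)"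
proof (rule filterlim_split_at_real)
  have "eventually (\<lambda>y::real. y < 0) (at_left 0)"
    by (simp add: eventually_at_filter)
  then have "eventually (\<lambda>y. exp_inv_poly P y / y = 0) (at_left 0)"
    by eventually_elim (simp add: exp_inv_poly_def)
  then show "((\<lambda>y. exp_inv_poly P y / y) \<longlongrightarrow> 0) (at_left 0)"
    by (rule tendsto_eventually)
  have "eventually (\<lambda>z::real. poly P z * z * exp (-z) = exp_inv_poly P (inverse z) / inverse z)
      at_top"
    using eventually_gt_at_top[of 0] by eventually_elim (simp add: exp_inv_poly_def divide_inverse)
  then have "((\<lambda>z. exp_inv_poly P (inverse z) / inverse z) \<longlongrightarrow> 0) at_top"
    using poly_mult_exp_neg_tendsto_0 by (rule Lim_transform_eventually[rotated])
  from filterlim_compose[OF this filterlim_inverse_at_top_right]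
  show "((\<lambda>y. exp_inv_poly P y / y) \<longlongrightarrow> 0) (at_right 0)"
    by simp
qed

lemma has_real_derivative_exp_inv_poly:
  "(exp_inv_poly P has_real_derivative exp_inv_poly (exp_inv_pderiv P) y) (at y)"
proof -
  consider "y > 0" | "y < 0" | "y = 0" by linarith
  then show ?thesis
  proof cases
    case 1
    have "((\<lambda>y. poly P (1/y) * exp (-1/y)) has_real_derivative
        poly (pderiv P) (1/y) * (- 1 / y^2) * exp (-1/y) + poly P (1/y) * (exp (-1/y) * (1/y^2)))
        (at y)"
      using 1 by (auto intro!: derivative_eq_intros DERIV_chain2[where f = "poly P"] poly_DERIV
          simp: power2_eq_square field_simps)
    moreover have "poly (pderiv P) (1/y) * (- 1 / y^2) * exp (-1/y)
        + poly P (1/y) * (exp (-1/y) * (1/y^2)) = exp_inv_poly (exp_inv_pderiv P) y"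
      using 1 by (simp add: exp_inv_poly_def exp_inv_pderiv_def field_simps power2_eq_square)
    ultimately have "((\<lambda>y. poly P (1/y) * exp (-1/y)) has_real_derivative
        exp_inv_poly (exp_inv_pderiv P) y) (at y)"
      by simp
    then show ?thesis
      by (rule has_field_derivative_transform_within_open[of _ _ _ "{0<..}"])
        (use 1 in \<open>auto simp: exp_inv_poly_def\<close>)
  next
    case 2
    have "((\<lambda>y. 0) has_real_derivative exp_inv_poly (exp_inv_pderiv P) y) (at y)"
      using 2 by (simp add: exp_inv_poly_def)
    then show ?thesis
      by (rule has_field_derivative_transform_within_open[of _ _ _ "{..<0}"])
        (use 2 in \<open>auto simp: exp_inv_poly_def\<close>)
  next
    case 3
    then show ?thesis
      using exp_inv_poly_div_tendsto_0[of P] by (simp add: DERIV_def exp_inv_poly_def)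
  qed
qed

text \<open>A class of functions closed under differentiation that contains the bumps below;
  this is how their smoothness is established.\<close>

definition exp_inv_comb :: "real poly \<Rightarrow> (real poly \<times> real poly) list \<Rightarrow> real \<Rightarrow> real" where
  "exp_inv_comb p xs x = (\<Sum>(P, Q)\<leftarrow>xs. exp_inv_poly P (poly p x) * poly Q x)"

definition exp_inv_comb_deriv ::
    "real poly \<Rightarrow> (real poly \<times> real poly) list \<Rightarrow> (real poly \<times> real poly) list" where
  "exp_inv_comb_deriv p xs =
    concat (map (\<lambda>(P, Q). [(exp_inv_pderiv P, pderiv p * Q), (P, pderiv Q)]) xs)"

lemma has_real_derivative_exp_inv_comb:
  "(exp_inv_comb p xs has_real_derivative exp_inv_comb p (exp_inv_comb_deriv p xs) x) (at x)"
proof (induction xs)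
  case Nil
  then show ?case by (simp add: exp_inv_comb_def exp_inv_comb_deriv_def)
next
  case (Cons PQ xs)
  obtain P Q where PQ: "PQ = (P, Q)" by force
  have "((\<lambda>x. exp_inv_poly P (poly p x) * poly Q x) has_real_derivative
      exp_inv_poly (exp_inv_pderiv P) (poly p x) * poly (pderiv p) x * poly Q x
      + exp_inv_poly P (poly p x) * poly (pderiv Q) x) (at x)"
    by (rule derivative_eq_intros DERIV_chain2[OF has_real_derivative_exp_inv_poly] poly_DERIV
        | simp)+
  from DERIV_add[OF this Cons.IH] show ?case
    by (simp add: exp_inv_comb_def exp_inv_comb_deriv_def PQ algebra_simps)
qed

lemma higher_deriv_exp_inv_comb:
  "(deriv ^^ k) (exp_inv_comb p xs) = exp_inv_comb p ((exp_inv_comb_deriv p ^^ k) xs)"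
  by (induction k) (auto intro!: DERIV_imp_deriv has_real_derivative_exp_inv_comb)

lemma higher_deriv_exp_inv_comb_differentiable:
  "(deriv ^^ k) (exp_inv_comb p xs) differentiable (at x)"
  unfolding higher_deriv_exp_inv_comb
  using has_real_derivative_exp_inv_comb real_differentiable_def by blast

definition bump :: "real \<Rightarrow> real \<Rightarrow> real \<Rightarrow> real \<Rightarrow> real" where
  "bump h a L x = h * exp_inv_poly [:1:] (a * (L^2 - x^2))"

lemma bump_eq_exp_inv_comb: "bump h a L = exp_inv_comb [:a * L^2, 0, -a:] [([:1:], [:h:])]"
  by (rule ext) (simp add: bump_def exp_inv_comb_def algebra_simps power2_eq_square)

lemma deriv_bump:
  "deriv (bump h a L) x = h * exp_inv_poly [:0, 0, 1:] (a * (L^2 - x^2)) * (- 2 * a * x)"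
proof -
  have "(bump h a L has_real_derivative
      h * (exp_inv_poly (exp_inv_pderiv [:1:]) (a * (L^2 - x^2)) * (a * (0 - 2 * x)))) (at x)"
    unfolding bump_def
    by (rule derivative_eq_intros DERIV_chain2[OF has_real_derivative_exp_inv_poly] | simp)+
  then show ?thesis
    by (intro DERIV_imp_deriv) (simp add: exp_inv_pderiv_def algebra_simps)
qed

lemma bump_eq_0:
  assumes "a \<ge> 0" "L^2 \<le> x^2"
  shows "bump h a L x = 0"
proof -
  have "a * (L^2 - x^2) \<le> 0"
    using assms by (simp add: mult_nonneg_nonpos)
  then show ?thesis
    by (simp add: bump_def exp_inv_poly_def)
qed

lemma bump_in_cone_gen:
  assumes "h \<ge> 0" "a > 0"
  shows "bump h a L \<in> cone_gen"
proof -
  have "\<forall>k x. (deriv ^^ k) (bump h a L) differentiable (at x)"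
    unfolding bump_eq_exp_inv_comb by (intro allI higher_deriv_exp_inv_comb_differentiable)
  moreover have "\<forall>x. \<bar>x\<bar> > \<bar>L\<bar> \<longrightarrow> bump h a L x = 0"
    using assms by (auto intro!: bump_eq_0 simp: abs_le_square_iff[symmetric])
  moreover have "\<forall>x\<ge>0. bump h a L x = bump h a L (-x) \<and> bump h a L (-x) \<ge> 0 \<and>
      deriv (bump h a L) x = - deriv (bump h a L) (-x) \<and> - deriv (bump h a L) (-x) \<le> 0"
    using assms by (auto simp: deriv_bump bump_def exp_inv_poly_def)
  ultimately show ?thesis
    unfolding cone_gen_def by blast
qed

lemma bump_measurable [measurable]: "bump h a L \<in> borel_measurable borel"
proof -
  have "continuous_on UNIV (bump h a L)"
    using higher_deriv_exp_inv_comb_differentiable[of 0]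
    by (intro continuous_at_imp_continuous_on)
      (auto intro: differentiable_imp_continuous_within simp: bump_eq_exp_inv_comb)
  then show ?thesis
    by (simp add: borel_measurable_continuous_onI)
qed

section \<open>The plateau lies in the cone\<close>

definition plateau :: "real \<Rightarrow> real \<Rightarrow> real \<Rightarrow> real" where
  "plateau h L x = h * indicator {-L<..<L} x"

lemma plateau_measurable [measurable]: "plateau h L \<in> borel_measurable borel"
  unfolding plateau_def by measurable

lemma plateau_square: "(plateau h L x)^2 = h^2 * indicator {-L<..<L} x"
  by (simp add: plateau_def indicator_def)

lemma notin_Ioo_square_le:
  fixes L x :: real
  assumes "L > 0" "x \<notin> {-L<..<L}"
  shows "L^2 \<le> x^2"
proof -
  have "\<bar>L\<bar> \<le> \<bar>x\<bar>"
    using assms by auto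
  then show ?thesis
    by (simp add: abs_le_square_iff)
qed

lemma bump_tendsto_plateau:
  assumes L: "L > 0"
  shows "(\<lambda>n. bump h (real (Suc n)) L x) \<longlonglongrightarrow> plateau h L x"
proof (cases "x \<in> {-L<..<L}")
  case True
  then have "\<not> \<bar>L\<bar> \<le> \<bar>x\<bar>"
    by auto
  then have d: "L^2 - x^2 > 0"
    by (simp add: abs_le_square_iff)
  have "bump h (real (Suc n)) L x = h * exp (- (1 / (L^2 - x^2)) * inverse (real (Suc n)))" for n
    using d by (simp add: bump_def exp_inv_poly_def field_simps del: of_nat_Suc)
  moreover have "(\<lambda>n. h * exp (- (1 / (L^2 - x^2)) * inverse (real (Suc n))))
      \<longlonglongrightarrow> h * exp (- (1 / (L^2 - x^2)) * 0)"
    by (intro tendsto_intros LIMSEQ_inverse_real_of_nat)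
  ultimately show ?thesis
    using True by (simp add: plateau_def)
next
  case False
  then show ?thesis
    using notin_Ioo_square_le[OF L False] by (simp add: bump_eq_0 plateau_def del: of_nat_Suc)
qed

lemma bump_plateau_diff_square_le:
  assumes h: "h \<ge> 0" and a: "a \<ge> 0" and L: "L > 0"
  shows "(bump h a L x - plateau h L x)^2 \<le> h^2 * indicator {-L<..<L} x"
proof (cases "x \<in> {-L<..<L}")
  case True
  have "0 \<le> bump h a L x" "bump h a L x \<le> h"
    using h by (auto simp: bump_def exp_inv_poly_def intro: mult_left_le)
  then show ?thesis
    using True h by (simp add: plateau_def abs_le_square_iff[symmetric])
next
  case False
  then show ?thesis
    using notin_Ioo_square_le[OF L False] a by (simp add: bump_eq_0 plateau_def)
qed

lemma bump_tendsto_plateau_L2: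
  assumes h: "h \<ge> 0" and L: "L > 0"
  shows "(\<lambda>n. \<integral>x. (bump h (real (Suc n)) L x - plateau h L x)^2 \<partial>lborel) \<longlonglongrightarrow> 0"
proof -
  have dom: "integrable lborel (\<lambda>x. h^2 * indicator {-L<..<L} x)"
    using L by (simp add: integrable_indicator_iff)
  have lim: "AE x in lborel. (\<lambda>n. (bump h (real (Suc n)) L x - plateau h L x)^2) \<longlonglongrightarrow> 0"
  proof (rule AE_I2)
    fix x
    have "(\<lambda>n. (bump h (real (Suc n)) L x - plateau h L x)^2) \<longlonglongrightarrow> (plateau h L x - plateau h L x)^2"
      by (intro tendsto_intros bump_tendsto_plateau[OF L])
    then show "(\<lambda>n. (bump h (real (Suc n)) L x - plateau h L x)^2) \<longlonglongrightarrow> 0"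
      by (simp only: diff_self power_zero_numeral)
  qed
  have bound: "AE x in lborel. norm ((bump h (real (Suc n)) L x - plateau h L x)^2)
      \<le> h^2 * indicator {-L<..<L} x" for n
    using bump_plateau_diff_square_le[OF h _ L] by simp
  have "(\<lambda>n. \<integral>x. (bump h (real (Suc n)) L x - plateau h L x)^2 \<partial>lborel)
      \<longlonglongrightarrow> (\<integral>x. 0 \<partial>(lborel :: real measure))"
    by (rule integral_dominated_convergence[OF _ _ dom lim bound]) measurable
  then show ?thesis
    by simp
qed

lemma plateau_in_coneK:
  assumes h: "h \<ge> 0" and L: "L > 0"
  shows "plateau h L \<in> coneK (h^2 * L)"
proof -
  have "integrable lborel (\<lambda>x. (plateau h L x)^2)"
    using L by (simp add: plateau_square integrable_indicator_iff)
  moreover have "(\<integral>x. (plateau h L x)^2 \<partial>lborel) = 2 * (h^2 * L)"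
    using L by (simp add: plateau_square)
  ultimately show ?thesis
    using bump_in_cone_gen[OF h] bump_tendsto_plateau_L2[OF h L]
    unfolding coneK_def cone_def
    by (auto intro!: exI[of _ "\<lambda>n. bump h (real (Suc n)) L"])
qed

section \<open>Upper bound for Q\<close>

lemma Aop_measurable [measurable]:
  fixes W :: "real \<Rightarrow> real"
  assumes [measurable]: "W \<in> borel_measurable borel"
  shows "Aop m W \<in> borel_measurable borel"
  unfolding Aop_def[abs_def] set_lebesgue_integral_def by measurable

lemma Aop_square_le_window:
  fixes W :: "real \<Rightarrow> real"
  assumes [measurable]: "W \<in> borel_measurable borel"
  shows "ennreal ((Aop m W s)^2) \<le> ennreal (real m) *
    (\<integral>\<^sup>+t. indicator {-(real m)/2..(real m)/2} t * ennreal ((W (s + t))^2) \<partial>lborel)"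
proof -
  define I where "I = {-(real m)/2..(real m)/2}"
  define g where "g = (\<lambda>t. indicator I t * W (s + t))"
  have "ennreal \<bar>Aop m W s\<bar> \<le> (\<integral>\<^sup>+t. ennreal \<bar>g t\<bar> \<partial>lborel)"
  proof (cases "integrable lborel g")
    case True
    then show ?thesis
      using integral_norm_bound_ennreal[OF True]
      by (simp add: Aop_def set_lebesgue_integral_def g_def I_def)
  next
    case False
    then show ?thesis
      by (simp add: Aop_def set_lebesgue_integral_def g_def I_def not_integrable_integral_eq)
  qed
  then have "(ennreal \<bar>Aop m W s\<bar>)^2 \<le> (\<integral>\<^sup>+t. ennreal \<bar>g t\<bar> \<partial>lborel)^2"
    by (intro power_mono) auto
  then have "ennreal ((Aop m W s)^2) \<le> (\<integral>\<^sup>+t. ennreal \<bar>g t\<bar> \<partial>lborel)^2"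
    by (simp add: ennreal_power power2_abs)
  also have "\<dots> = (\<integral>\<^sup>+t. ennreal \<bar>g t\<bar> * indicator I t \<partial>lborel)^2"
    by (intro arg_cong[where f = "\<lambda>x. x^2"] nn_integral_cong) (simp add: g_def indicator_def)
  also have "\<dots> \<le> (\<integral>\<^sup>+t. (ennreal \<bar>g t\<bar>)^2 \<partial>lborel) * (\<integral>\<^sup>+t. (indicator I t)^2 \<partial>lborel)"
    by (rule Cauchy_Schwarz_nn_integral) (auto simp: g_def I_def)
  also have "(\<integral>\<^sup>+t. (ennreal \<bar>g t\<bar>)^2 \<partial>lborel)
      = (\<integral>\<^sup>+t. indicator I t * ennreal ((W (s + t))^2) \<partial>lborel)"
    by (intro nn_integral_cong) (simp add: g_def indicator_def ennreal_power power2_abs)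
  also have "(\<integral>\<^sup>+t. (indicator I t)^2 \<partial>lborel) = (\<integral>\<^sup>+t. indicator I t \<partial>lborel)"
    by (intro nn_integral_cong) (simp add: indicator_def)
  finally show ?thesis
    by (simp add: I_def mult.commute)
qed

lemma nn_integral_shift_square:
  fixes W :: "real \<Rightarrow> real"
  assumes [measurable]: "W \<in> borel_measurable borel" and Wi: "integrable lborel (\<lambda>x. (W x)^2)"
  shows "(\<integral>\<^sup>+s. ennreal ((W (s + t))^2) \<partial>lborel) = ennreal (\<integral>x. (W x)^2 \<partial>lborel)"
proof -
  have "(\<integral>\<^sup>+s. ennreal ((W (s + t))^2) \<partial>lborel) = (\<integral>\<^sup>+x. ennreal ((W (t + 1 * x))^2) \<partial>lborel)"
    by (simp add: add.commute)
  also have "\<dots> = (\<integral>\<^sup>+x. ennreal ((W x)^2) \<partial>lborel)"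
    using nn_integral_real_affine[of "\<lambda>x. ennreal ((W x)^2)" 1 t] by simp
  also have "\<dots> = ennreal (\<integral>x. (W x)^2 \<partial>lborel)"
    by (rule nn_integral_eq_integral[OF Wi]) simp
  finally show ?thesis .
qed

lemma nn_integral_window_square:
  fixes W :: "real \<Rightarrow> real"
  assumes [measurable]: "W \<in> borel_measurable borel" and Wi: "integrable lborel (\<lambda>x. (W x)^2)"
  shows "(\<integral>\<^sup>+s. (\<integral>\<^sup>+t. indicator {-(real m)/2..(real m)/2} t * ennreal ((W (s + t))^2)
      \<partial>lborel) \<partial>lborel) = ennreal (real m) * ennreal (\<integral>x. (W x)^2 \<partial>lborel)"
proof -
  define I where "I = {-(real m)/2..(real m)/2}"
  have "(\<integral>\<^sup>+s. (\<integral>\<^sup>+t. indicator I t * ennreal ((W (s + t))^2) \<partial>lborel) \<partial>lborel)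
      = (\<integral>\<^sup>+t. (\<integral>\<^sup>+s. indicator I t * ennreal ((W (s + t))^2) \<partial>lborel) \<partial>lborel)"
    by (rule lborel_pair.Fubini') (simp add: I_def)
  also have "\<dots> = (\<integral>\<^sup>+t. indicator I t * ennreal (\<integral>x. (W x)^2 \<partial>lborel) \<partial>lborel)"
    by (simp add: nn_integral_cmult nn_integral_shift_square[OF _ Wi])
  also have "\<dots> = ennreal (real m) * ennreal (\<integral>x. (W x)^2 \<partial>lborel)"
    by (simp add: nn_integral_multc I_def)
  finally show ?thesis
    unfolding I_def .
qed

lemma nn_integral_Aop_square_le:
  fixes W :: "real \<Rightarrow> real"
  assumes Wm [measurable]: "W \<in> borel_measurable borel" and Wi: "integrable lborel (\<lambda>x. (W x)^2)"
  shows "(\<integral>\<^sup>+s. ennreal ((Aop m W s)^2) \<partial>lborel) \<le> ennreal ((real m)^2 * (\<integral>x. (W x)^2 \<partial>lborel))"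
proof -
  have "(\<integral>\<^sup>+s. ennreal ((Aop m W s)^2) \<partial>lborel) \<le> (\<integral>\<^sup>+s. ennreal (real m) *
      (\<integral>\<^sup>+t. indicator {-(real m)/2..(real m)/2} t * ennreal ((W (s + t))^2) \<partial>lborel) \<partial>lborel)"
    by (intro nn_integral_mono Aop_square_le_window) simp
  also have "\<dots> = ennreal (real m) * (ennreal (real m) * ennreal (\<integral>x. (W x)^2 \<partial>lborel))"
    using nn_integral_window_square[OF Wm Wi, of m] by (simp add: nn_integral_cmult)
  also have "\<dots> = ennreal ((real m)^2 * (\<integral>x. (W x)^2 \<partial>lborel))"
    by (simp add: ennreal_mult power2_eq_square mult.assoc)
  finally show ?thesis .
qed

lemma nn_integral_Aop_square_series_le:
  fixes W :: "real \<Rightarrow> real" and c :: "nat \<Rightarrow> real"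
  assumes W: "W \<in> coneK K" and c: "\<And>m. c m \<ge> 0"
    and summable: "summable (\<lambda>m. c m * (real (Suc m))^2)"
  shows "(\<integral>\<^sup>+s. (\<Sum>m. ennreal (1/2 * c m * (Aop (Suc m) W s)^2)) \<partial>lborel)
    \<le> ennreal (K * (\<Sum>m. c m * (real (Suc m))^2))"
proof -
  have Wm [measurable]: "W \<in> borel_measurable borel" and Wi: "integrable lborel (\<lambda>x. (W x)^2)"
    and WK: "(\<integral>x. (W x)^2 \<partial>lborel) = 2 * K"
    using W by (auto simp: coneK_def cone_def)
  have K: "K \<ge> 0"
    using WK integral_nonneg_AE[of "\<lambda>x. (W x)^2" lborel] by simp
  have "ennreal (1/2 * c m * (Aop (Suc m) W s)^2)
      = ennreal (1/2 * c m) * ennreal ((Aop (Suc m) W s)^2)" for m s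
    using c[of m] by (intro ennreal_mult') simp
  then have "(\<integral>\<^sup>+s. (\<Sum>m. ennreal (1/2 * c m * (Aop (Suc m) W s)^2)) \<partial>lborel)
      = (\<Sum>m. \<integral>\<^sup>+s. ennreal (1/2 * c m) * ennreal ((Aop (Suc m) W s)^2) \<partial>lborel)"
    by (simp only:) (rule nn_integral_suminf, measurable)
  also have "\<dots> = (\<Sum>m. ennreal (1/2 * c m) * (\<integral>\<^sup>+s. ennreal ((Aop (Suc m) W s)^2) \<partial>lborel))"
    by (simp add: nn_integral_cmult)
  also have "\<dots> \<le> (\<Sum>m. ennreal (1/2 * c m) * ennreal ((real (Suc m))^2 * (2 * K)))"
    using nn_integral_Aop_square_le[OF Wm Wi] unfolding WK
    by (intro suminf_le summableI mult_left_mono) (auto simp del: of_nat_Suc)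
  also have "\<dots> = (\<Sum>m. ennreal (K * (c m * (real (Suc m))^2)))"
    using c K by (simp add: ennreal_mult[symmetric] algebra_simps)
  also have "\<dots> = ennreal (K * (\<Sum>m. c m * (real (Suc m))^2))"
    using c K summable by (simp add: suminf_ennreal2 suminf_mult)
  finally show ?thesis .
qed

section \<open>Lower bound for P on the plateau\<close>

lemma C4_nonneg_derivs:
  assumes "C4_nonneg f"
  obtains d where "d 0 = f"
    and "\<And>k x. k < 4 \<Longrightarrow> x > 0 \<Longrightarrow> (d k has_real_derivative d (Suc k) x) (at x)"
    and "\<And>k x. k \<le> 4 \<Longrightarrow> x > 0 \<Longrightarrow> hderiv f k x = d k x"
proof -
  obtain d where d0: "d 0 = f"
    and d_within: "\<forall>k<4. \<forall>x\<ge>0. (d k has_real_derivative d (Suc k) x) (at x within {0..})"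
    using assms unfolding C4_nonneg_def by blast
  have d: "(d k has_real_derivative d (Suc k) x) (at x)" if "k < 4" "x > 0" for k x
  proof -
    have "(d k has_real_derivative d (Suc k) x) (at x within {0..})"
      using d_within that by simp
    then have "(d k has_real_derivative d (Suc k) x) (at x within {0<..})"
      by (rule DERIV_subset) auto
    then show ?thesis
      using at_within_open[of x "{0<..}"] that by simp
  qed
  have "\<forall>x>0. (deriv ^^ k) f x = d k x" if "k \<le> 4" for k
    using that
  proof (induction k)
    case 0
    then show ?case by (simp add: d0)
  next
    case (Suc k)
    show ?case
    proof (intro allI impI)
      fix x :: real
      assume x: "x > 0"
      have "((deriv ^^ k) f has_real_derivative d (Suc k) x) (at x)"
        by (rule has_field_derivative_transform_within_open[OF d[of k x], of "{0<..}"])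
          (use Suc x in auto)
      then show "(deriv ^^ Suc k) f x = d (Suc k) x"
        by (simp add: DERIV_imp_deriv)
    qed
  qed
  then show ?thesis
    using that[OF d0 d] by (auto simp: hderiv_def)
qed

lemma taylor_cubic_le:
  fixes f :: "real \<Rightarrow> real"
  assumes d0: "d 0 = f"
    and d: "\<And>k x. k < 4 \<Longrightarrow> x > 0 \<Longrightarrow> (d k has_real_derivative d (Suc k) x) (at x)"
    and d4: "\<And>x. x > 0 \<Longrightarrow> d 4 x \<ge> 0"
    and r: "0 < r" "r < a"
  shows "1/2 * d 2 a * r^2 - d 3 a / 6 * r^3 \<le> f (a - r) - f a + d 1 a * r"
proof -
  have "\<exists>t. a - r < t \<and> t < a \<and>
      f (a - r) = (\<Sum>k<4. d k a / fact k * ((a - r) - a)^k) + d 4 t / fact 4 * ((a - r) - a)^4"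
    using r d0 by (intro Taylor_down[where diff = d]) (auto intro!: d)
  then obtain t where t: "a - r < t" "t < a"
    and f: "f (a - r) = (\<Sum>k<4. d k a / fact k * ((a - r) - a)^k) + d 4 t / fact 4 * ((a - r) - a)^4"
    by blast
  have "(\<Sum>k<4. d k a / fact k * ((a - r) - a)^k)
      = f a - d 1 a * r + d 2 a / 2 * r^2 - d 3 a / 6 * r^3"
    by (simp add: d0 eval_nat_numeral fact_numeral power2_eq_square power3_eq_cube)
  moreover have "d 4 t / fact 4 * ((a - r) - a)^4 \<ge> 0"
    using d4[of t] t r by simp
  ultimately show ?thesis
    using f by simp
qed

lemma C4_nonneg_taylor_cubic_le:
  assumes f: "C4_nonneg f" and f4: "\<And>x. x > 0 \<Longrightarrow> hderiv f 4 x \<ge> 0" and r: "0 \<le> r" "r < a"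
  shows "1/2 * hderiv f 2 a * r^2 - hderiv f 3 a / 6 * r^3 \<le> f (a - r) - f a + hderiv f 1 a * r"
proof (cases "r = 0")
  case False
  obtain d where d0: "d 0 = f"
    and d: "\<And>k x. k < 4 \<Longrightarrow> x > 0 \<Longrightarrow> (d k has_real_derivative d (Suc k) x) (at x)"
    and hd: "\<And>k x. k \<le> 4 \<Longrightarrow> x > 0 \<Longrightarrow> hderiv f k x = d k x"
    using C4_nonneg_derivs[OF f] by blast
  have "1/2 * d 2 a * r^2 - d 3 a / 6 * r^3 \<le> f (a - r) - f a + d 1 a * r"
    using False r f4 hd[of 4] by (intro taylor_cubic_le[OF d0 d]) auto
  then show ?thesis
    using r hd[of 1 a] hd[of 2 a] hd[of 3 a] by simp
qed simp

lemma Psi_ge_quadratic_cubic: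
  assumes "C4_nonneg (\<Phi> m)" "\<And>s. s > 0 \<Longrightarrow> hderiv (\<Phi> m) 4 s \<ge> 0" "0 \<le> r" "r < \<nu> * real m"
    and "\<delta> \<le> - hderiv (\<Phi> m) 3 (\<nu> * real m) / 6"
  shows "1/2 * hderiv (\<Phi> m) 2 (\<nu> * real m) * r^2 + \<delta> * r^3 \<le> Psi \<Phi> \<nu> m r"
proof -
  have "\<delta> * r^3 \<le> - hderiv (\<Phi> m) 3 (\<nu> * real m) / 6 * r^3"
    using assms(3,5) by (intro mult_right_mono) auto
  then show ?thesis
    using C4_nonneg_taylor_cubic_le[OF assms(1-4)] by (simp add: Psi_def)
qed

lemma Aop_plateau:
  assumes "\<bar>s\<bar> < L - real m / 2"
  shows "Aop m (plateau h L) s = h * real m"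
proof -
  have "Aop m (plateau h L) s = (LINT t:{-(real m)/2..(real m)/2}|lborel. h)"
    unfolding Aop_def using assms
    by (intro set_lebesgue_integral_cong) (auto simp: plateau_def indicator_def)
  also have "\<dots> = measure lborel {-(real m)/2..(real m)/2} *\<^sub>R h"
    by (rule set_integral_const) auto
  finally show ?thesis
    by simp
qed

lemma Pfun_plateau_ge_series:
  "(\<Sum>m. ennreal (Psi \<Phi> \<nu> (Suc m) (h * real (Suc m)) * max 0 (2 * L - real (Suc m))))
    \<le> Pfun \<Phi> \<nu> (plateau h L)"
proof -
  define J where "J m = {-(L - real (Suc m)/2)<..<L - real (Suc m)/2}" for m
  have "emeasure lborel (J m) = ennreal (max 0 (2 * L - real (Suc m)))" for m
  proof (cases "real (Suc m) \<le> 2 * L")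
    case False
    then have "J m = {}"
      unfolding J_def by (intro greaterThanLessThan_empty) (simp add: field_simps)
    then show ?thesis
      using False by simp
  qed (simp add: J_def)
  then have "(\<Sum>m. ennreal (Psi \<Phi> \<nu> (Suc m) (h * real (Suc m)) * max 0 (2 * L - real (Suc m))))
      = (\<Sum>m. \<integral>\<^sup>+s. ennreal (Psi \<Phi> \<nu> (Suc m) (h * real (Suc m))) * indicator (J m) s \<partial>lborel)"
    by (simp add: nn_integral_cmult_indicator J_def ennreal_mult'')
  also have "\<dots> = (\<integral>\<^sup>+s. (\<Sum>m. ennreal (Psi \<Phi> \<nu> (Suc m) (h * real (Suc m))) * indicator (J m) s)
      \<partial>lborel)"
    by (rule nn_integral_suminf[symmetric]) (simp add: J_def)
  also have "\<dots> \<le> Pfun \<Phi> \<nu> (plateau h L)"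
    unfolding Pfun_def
    by (intro nn_integral_mono suminf_le summableI)
      (auto simp: J_def indicator_def Aop_plateau simp del: of_nat_Suc)
  finally show ?thesis .
qed

definition plateau_quadratic_part :: "(nat \<Rightarrow> real) \<Rightarrow> real \<Rightarrow> real \<Rightarrow> real" where
  "plateau_quadratic_part c h L =
    (\<Sum>m. 1/2 * c m * (h * real (Suc m))^2 * max 0 (2 * L - real (Suc m)))"

lemma summable_plateau_quadratic_part:
  assumes c: "\<And>m. c m \<ge> 0" and summable: "summable (\<lambda>m. c m * (real (Suc m))^2)" and L: "L \<ge> 0"
  shows "summable (\<lambda>m. 1/2 * c m * (h * real (Suc m))^2 * max 0 (2 * L - real (Suc m)))"
proof (rule summable_comparison_test'[OF summable_mult[OF summable, of "h^2 * L"]])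
  fix m
  have "max 0 (2 * L - real (Suc m)) \<le> 2 * L"
    using L by simp
  then have "1/2 * (c m * h^2 * (real (Suc m))^2) * max 0 (2 * L - real (Suc m))
      \<le> 1/2 * (c m * h^2 * (real (Suc m))^2) * (2 * L)"
    using c[of m] by (intro mult_left_mono) auto
  then show "norm (1/2 * c m * (h * real (Suc m))^2 * max 0 (2 * L - real (Suc m)))
      \<le> h^2 * L * (c m * (real (Suc m))^2)"
    using c[of m] by (simp add: power_mult_distrib mult_ac)
qed

lemma Pfun_plateau_ge:
  fixes \<Phi> :: "nat \<Rightarrow> real \<Rightarrow> real" and \<nu> :: real
  defines "c \<equiv> \<lambda>m. hderiv (\<Phi> (Suc m)) 2 (\<nu> * real (Suc m))"
  assumes \<nu>: "\<nu> > 0" and h: "0 \<le> h" "h < \<nu>" and L: "1 \<le> 2 * L"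
    and C4: "\<And>m. m \<ge> 1 \<Longrightarrow> C4_nonneg (\<Phi> m)"
    and d2: "\<And>m s. m \<ge> 1 \<Longrightarrow> s > 0 \<Longrightarrow> hderiv (\<Phi> m) 2 s \<ge> 0"
    and d3: "\<And>m s. m \<ge> 1 \<Longrightarrow> s > 0 \<Longrightarrow> hderiv (\<Phi> m) 3 s \<le> 0"
    and d4: "\<And>m s. m \<ge> 1 \<Longrightarrow> s > 0 \<Longrightarrow> hderiv (\<Phi> m) 4 s \<ge> 0"
    and summable: "summable (\<lambda>m. c m * (real (Suc m))^2)"
  shows "ennreal (plateau_quadratic_part c h L + (- hderiv (\<Phi> 1) 3 \<nu> / 6) * h^3 * (2 * L - 1))
    \<le> Pfun \<Phi> \<nu> (plateau h L)"
proof -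
  define G where "G = (- hderiv (\<Phi> 1) 3 \<nu> / 6) * h^3 * (2 * L - 1)"
  \<comment> \<open>Of the cubic Taylor terms only that of m = 1 is kept; the others are nonnegative.\<close>
  define \<delta> where "\<delta> m = (if m = 0 then - hderiv (\<Phi> 1) 3 \<nu> / 6 else 0)" for m :: nat
  define y where "y m = (1/2 * c m * (h * real (Suc m))^2 + \<delta> m * (h * real (Suc m))^3)
    * max 0 (2 * L - real (Suc m))" for m
  have c0: "c m \<ge> 0" for m
    using d2 \<nu> by (simp add: c_def)
  have \<delta>: "0 \<le> \<delta> m" "\<delta> m \<le> - hderiv (\<Phi> (Suc m)) 3 (\<nu> * real (Suc m)) / 6" for m
    using d3[of "Suc m" "\<nu> * real (Suc m)"] d3[of 1 \<nu>] \<nu> by (auto simp: \<delta>_def)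
  have y0: "y m \<ge> 0" for m
    using c0[of m] \<delta>(1)[of m] h unfolding y_def by (intro mult_nonneg_nonneg add_nonneg_nonneg) auto
  have y_eq: "y = (\<lambda>m. 1/2 * c m * (h * real (Suc m))^2 * max 0 (2 * L - real (Suc m))
      + (if m = 0 then G else 0))"
    using L by (auto simp: y_def \<delta>_def G_def algebra_simps)
  have y: "y sums (plateau_quadratic_part c h L + G)"
    using L unfolding y_eq plateau_quadratic_part_def
    by (intro sums_add summable_sums summable_plateau_quadratic_part[OF c0 summable]
        sums_single[of 0 "\<lambda>_. G", simplified]) auto
  have "ennreal (plateau_quadratic_part c h L + G) = (\<Sum>m. ennreal (y m))"
    using suminf_ennreal2[OF y0 sums_summable[OF y]] sums_unique[OF y] by simp
  also have "\<dots> \<le> (\<Sum>m. ennreal (Psi \<Phi> \<nu> (Suc m) (h * real (Suc m)) * max 0 (2 * L - real (Suc m))))"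
    unfolding y_def c_def using C4 d4 h \<delta>(2)
    by (intro suminf_le summableI ennreal_leI mult_right_mono Psi_ge_quadratic_cubic) auto
  also have "\<dots> \<le> Pfun \<Phi> \<nu> (plateau h L)"
    by (rule Pfun_plateau_ge_series)
  finally show ?thesis
    by (simp only: G_def)
qed

section \<open>The cubic gain beats the quadratic error\<close>

lemma summable_square_of_powr:
  fixes c :: "nat \<Rightarrow> real"
  assumes c: "\<And>m. c m \<ge> 0" and \<gamma>: "2 \<le> \<gamma>" and summable: "summable (\<lambda>m. c m * real (Suc m) powr \<gamma>)"
  shows "summable (\<lambda>m. c m * (real (Suc m))^2)"
proof (rule summable_comparison_test'[OF summable])
  fix m
  have "real (Suc m) powr 2 \<le> real (Suc m) powr \<gamma>"
    using \<gamma> by (intro powr_mono) auto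
  then show "norm (c m * (real (Suc m))^2) \<le> c m * real (Suc m) powr \<gamma>"
    using c[of m] by (simp add: mult_left_mono powr_numeral)
qed

lemma one_minus_powr_le_max:
  fixes x e :: real
  assumes "0 < x" "0 < e" "e \<le> 1"
  shows "1 - x powr e \<le> max 0 (1 - x)"
proof (cases "x \<le> 1")
  case True
  then have "x powr 1 \<le> x powr e"
    using assms by (intro powr_mono') auto
  then show ?thesis
    using assms by simp
next
  case False
  then have "1 \<le> x powr e"
    using assms by (intro ge_one_powr_ge_zero) auto
  then show ?thesis
    by simp
qed

lemma powr_mult_powr_two_minus:
  fixes a b \<gamma> :: real
  assumes "a > 0" "b > 0"
  shows "a powr \<gamma> * b powr (2 - \<gamma>) = a^2 * (a / b) powr (\<gamma> - 2)"
proof -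
  have "a powr \<gamma> = a powr 2 * a powr (\<gamma> - 2)" "b powr (2 - \<gamma>) = inverse (b powr (\<gamma> - 2))"
    by (simp_all add: powr_add[symmetric] powr_minus[symmetric])
  moreover have "(a / b) powr (\<gamma> - 2) = a powr (\<gamma> - 2) / b powr (\<gamma> - 2)"
    using assms by (simp add: powr_divide)
  ultimately show ?thesis
    using assms by (simp add: powr_numeral divide_inverse mult.assoc)
qed

lemma plateau_quadratic_term_ge:
  fixes c K L M \<gamma> :: real
  assumes c: "c \<ge> 0" and K: "K \<ge> 0" and L: "L > 0" and M: "M \<ge> 1" and \<gamma>: "2 < \<gamma>" "\<gamma> \<le> 3"
  shows "K * (c * M^2) - K * (2 * L) powr (2 - \<gamma>) * (c * M powr \<gamma>)
    \<le> 1/2 * c * (sqrt (K / L) * M)^2 * max 0 (2 * L - M)"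
proof -
  define x where "x = M / (2 * L)"
  have x: "x > 0"
    using M L by (simp add: x_def)
  have "K * (c * M^2) - K * (2 * L) powr (2 - \<gamma>) * (c * M powr \<gamma>)
      = K * c * M^2 * (1 - x powr (\<gamma> - 2))"
    using powr_mult_powr_two_minus[of M "2 * L" \<gamma>] M L by (simp add: x_def algebra_simps)
  also have "\<dots> \<le> K * c * M^2 * max 0 (1 - x)"
    using one_minus_powr_le_max[OF x, of "\<gamma> - 2"] \<gamma> K c by (intro mult_left_mono) auto
  also have "\<dots> = 1/2 * c * (sqrt (K / L) * M)^2 * max 0 (2 * L - M)"
    using K L by (simp add: x_def power_mult_distrib max_def field_simps)
  finally show ?thesis .
qed

lemma plateau_quadratic_part_ge:
  fixes c :: "nat \<Rightarrow> real"
  assumes c: "\<And>m. c m \<ge> 0" and summable: "summable (\<lambda>m. c m * real (Suc m) powr \<gamma>)"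
    and \<gamma>: "2 < \<gamma>" "\<gamma> \<le> 3" and K: "K \<ge> 0" and L: "L > 0"
  shows "K * (\<Sum>m. c m * (real (Suc m))^2)
      - K * (2 * L) powr (2 - \<gamma>) * (\<Sum>m. c m * real (Suc m) powr \<gamma>)
    \<le> plateau_quadratic_part c (sqrt (K / L)) L"
proof (rule sums_le)
  have summable2: "summable (\<lambda>m. c m * (real (Suc m))^2)"
    using summable_square_of_powr[OF c _ summable] \<gamma> by simp
  show "(\<lambda>m. K * (c m * (real (Suc m))^2) - K * (2 * L) powr (2 - \<gamma>) * (c m * real (Suc m) powr \<gamma>))
      sums (K * (\<Sum>m. c m * (real (Suc m))^2)
        - K * (2 * L) powr (2 - \<gamma>) * (\<Sum>m. c m * real (Suc m) powr \<gamma>))"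
    by (rule sums_diff[OF sums_mult[OF summable_sums[OF summable2]]
          sums_mult[OF summable_sums[OF summable]]])
  show "(\<lambda>m. 1/2 * c m * (sqrt (K / L) * real (Suc m))^2 * max 0 (2 * L - real (Suc m)))
      sums plateau_quadratic_part c (sqrt (K / L)) L"
    unfolding plateau_quadratic_part_def
    using L by (intro summable_sums summable_plateau_quadratic_part[OF c summable2]) simp
  show "K * (c m * (real (Suc m))^2) - K * (2 * L) powr (2 - \<gamma>) * (c m * real (Suc m) powr \<gamma>)
      \<le> 1/2 * c m * (sqrt (K / L) * real (Suc m))^2 * max 0 (2 * L - real (Suc m))" for m
    by (rule plateau_quadratic_term_ge[OF c K L _ \<gamma>]) simp
qed

lemma eventually_cubic_gain_gt:
  fixes A K \<delta> \<gamma> :: real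
  assumes \<gamma>: "5/2 < \<gamma>" and A: "A \<ge> 0" and \<delta>: "\<delta> > 0" and K: "K > 0"
  shows "eventually (\<lambda>L. K * (2 * L) powr (2 - \<gamma>) * A < \<delta> * sqrt (K / L)^3 * (2 * L - 1)) at_top"
proof -
  have "((\<lambda>L. A * 2 powr (2 - \<gamma>) * L powr (5/2 - \<gamma>)) \<longlongrightarrow> A * 2 powr (2 - \<gamma>) * 0) at_top"
    using \<gamma> by (intro tendsto_mult tendsto_const tendsto_neg_powr filterlim_ident) simp_all
  then have "eventually (\<lambda>L. A * 2 powr (2 - \<gamma>) * L powr (5/2 - \<gamma>) < \<delta> * sqrt K) at_top"
    using \<delta> K by (intro order_tendstoD(2)) auto
  moreover have "eventually (\<lambda>L::real. L \<ge> 1) at_top"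
    by (rule eventually_ge_at_top)
  ultimately show ?thesis
  proof eventually_elim
    case (elim L)
    have "(2 * L) powr (2 - \<gamma>) * sqrt L = 2 powr (2 - \<gamma>) * L powr (5/2 - \<gamma>)"
      using elim by (simp add: powr_mult powr_half_sqrt[symmetric] powr_add[symmetric])
    then have "A * (2 * L) powr (2 - \<gamma>) * sqrt L < \<delta> * sqrt K"
      using elim by (simp add: mult_ac)
    then have "K * (2 * L) powr (2 - \<gamma>) * A < \<delta> * sqrt (K / L)^3 * L"
      using K elim by (simp add: real_sqrt_divide power3_eq_cube field_simps)
    also have "\<dots> \<le> \<delta> * sqrt (K / L)^3 * (2 * L - 1)"
      using \<delta> K elim by (intro mult_left_mono) auto
    finally show ?case .
  qed
qed

lemma eventually_plateau_lower_bound_gt: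
  fixes c :: "nat \<Rightarrow> real"
  assumes c: "\<And>m. c m \<ge> 0" and summable: "summable (\<lambda>m. c m * real (Suc m) powr \<gamma>)"
    and \<gamma>: "5/2 < \<gamma>" "\<gamma> \<le> 3" and K: "K > 0" and \<delta>: "\<delta> > 0"
  shows "eventually (\<lambda>L. K * (\<Sum>m. c m * (real (Suc m))^2)
    < plateau_quadratic_part c (sqrt (K / L)) L + \<delta> * sqrt (K / L)^3 * (2 * L - 1)) at_top"
proof -
  have "(\<Sum>m. c m * real (Suc m) powr \<gamma>) \<ge> 0"
    using c by (intro suminf_nonneg summable) simp
  from eventually_cubic_gain_gt[OF \<gamma>(1) this \<delta> K] eventually_gt_at_top[of 0]
  show ?thesis
  proof eventually_elim
    case (elim L)
    then show ?case
      using plateau_quadratic_part_ge[OF c summable _ \<gamma>(2), of K L] \<gamma> K by simp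
  qed
qed

theorem lemma2p9:
  fixes \<Phi> :: "nat \<Rightarrow> real \<Rightarrow> real" and \<nu> K \<gamma> :: real
  assumes nu: "\<nu> > 0"
    and K: "0 < K" "K < \<nu>\<^sup>2 / 2"
    and gamma: "5/2 < \<gamma>" "\<gamma> < 3"
    and C4: "\<And>m. m \<ge> 1 \<Longrightarrow> C4_nonneg (\<Phi> m)"
    and nonneg0: "\<And>m. m \<ge> 1 \<Longrightarrow> \<Phi> m 0 \<ge> 0"
    and signs: "\<And>m s. m \<ge> 1 \<Longrightarrow> s > 0 \<Longrightarrow>
        \<Phi> m s \<ge> 0 \<and> hderiv (\<Phi> m) 1 s \<le> 0 \<and> hderiv (\<Phi> m) 2 s \<ge> 0 \<and>
        hderiv (\<Phi> m) 3 s \<le> 0 \<and> hderiv (\<Phi> m) 4 s \<ge> 0"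
    and strict: "\<And>s. s > 0 \<Longrightarrow>
        \<Phi> 1 s > 0 \<and> hderiv (\<Phi> 1) 1 s < 0 \<and> hderiv (\<Phi> 1) 2 s > 0 \<and>
        hderiv (\<Phi> 1) 3 s < 0 \<and> hderiv (\<Phi> 1) 4 s > 0"
    and sum1: "summable (\<lambda>m. hderiv (\<Phi> (Suc m)) 1 (\<nu> * real (Suc m) - sqrt (2 * K * real (Suc m))) * real (Suc m))"
    and sum2: "summable (\<lambda>m. hderiv (\<Phi> (Suc m)) 2 (\<nu> * real (Suc m) - sqrt (2 * K * real (Suc m))) * (real (Suc m))\<^sup>2)"
    and sum3: "summable (\<lambda>m. hderiv (\<Phi> (Suc m)) 2 (\<nu> * real (Suc m)) * real (Suc m) powr \<gamma>)"
    and sum4: "summable (\<lambda>m. hderiv (\<Phi> (Suc m)) 3 (\<nu> * real (Suc m) - sqrt (2 * K * real (Suc m))) * real (Suc m) powr (3/2))"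
  shows "(SUP W\<in>coneK K. Qfun \<Phi> \<nu> W) < (SUP W\<in>coneK K. Pfun \<Phi> \<nu> W)"
proof -
  define c where "c = (\<lambda>m. hderiv (\<Phi> (Suc m)) 2 (\<nu> * real (Suc m)))"
  define \<delta> where "\<delta> = - hderiv (\<Phi> 1) 3 \<nu> / 6"
  define S where "S = (\<Sum>m. c m * (real (Suc m))^2)"
  have c: "c m \<ge> 0" for m
    using signs[of "Suc m" "\<nu> * real (Suc m)"] nu by (simp add: c_def)
  have c_powr: "summable (\<lambda>m. c m * real (Suc m) powr \<gamma>)"
    using sum3 by (simp add: c_def)
  have c_square: "summable (\<lambda>m. c m * (real (Suc m))^2)"
    using summable_square_of_powr[OF c _ c_powr] gamma by simp
  have "eventually (\<lambda>L. 1 \<le> L \<and>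
      K * S < plateau_quadratic_part c (sqrt (K / L)) L + \<delta> * sqrt (K / L)^3 * (2 * L - 1)) at_top"
    unfolding S_def using strict[OF nu] gamma K
    by (intro eventually_conj eventually_ge_at_top eventually_plateau_lower_bound_gt[OF c c_powr])
      (auto simp: \<delta>_def)
  then obtain L where "1 \<le> L"
    and L: "K * S < plateau_quadratic_part c (sqrt (K / L)) L + \<delta> * sqrt (K / L)^3 * (2 * L - 1)"
    by (auto simp: eventually_at_top_linorder)
  define h where "h = sqrt (K / L)"
  \<comment> \<open>Here K < nu^2/2 enters: it keeps h m inside the domain [0, nu m) of Psi_m.\<close>
  have "K / L < \<nu>^2"
    using K \<open>1 \<le> L\<close> mult_right_mono[of 1 L "\<nu>^2"] by (simp add: field_simps)
  then have h: "0 \<le> h" "h < \<nu>" "h^2 * L = K"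
    using real_sqrt_less_mono[of "K / L" "\<nu>^2"] \<open>1 \<le> L\<close> nu K by (auto simp: h_def)
  have "(SUP W\<in>coneK K. Qfun \<Phi> \<nu> W) \<le> ennreal (K * S)"
    using nn_integral_Aop_square_series_le[OF _ c c_square]
    by (intro SUP_least) (simp add: Qfun_def c_def S_def)
  also have "\<dots> < ennreal (plateau_quadratic_part c h L + \<delta> * h^3 * (2 * L - 1))"
    using L K suminf_nonneg[OF c_square] c by (subst ennreal_less_iff) (auto simp: h_def S_def)
  also have "\<dots> \<le> Pfun \<Phi> \<nu> (plateau h L)"
    unfolding c_def \<delta>_def using h \<open>1 \<le> L\<close> nu signs C4 c_square
    by (intro Pfun_plateau_ge) (auto simp: c_def)
  also have "\<dots> \<le> (SUP W\<in>coneK K. Pfun \<Phi> \<nu> W)"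
    using plateau_in_coneK[of h L] h \<open>1 \<le> L\<close> by (intro SUP_upper) auto
  finally show ?thesis .
qed

end
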